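(* For every $d$ with $0\le d\le\rho(m)-1$, letting $L_4(d)=L_1(d)+h+d+1-\rho(m)(1+p_d)$, we have for every integer $t\ge 0$ \[ z\big(t+L_4(d),\,d\big)=w\big(t+h+d+1-\rho(m)(1+p_d),\,d\big). \]
   Context: For $u\in\mathbb{R}$ let $\mathbf 1[u]=1$ if $u\ge 0$ and $\mathbf 1[u]=0$ if $u<0$. Let $m$ be a positive integer and let $\rho(m)$ denote the number of primes $p$ with $2m<p<3m$; assume $\rho(m)\ge 2$. List these primes as $p_0>p_1>\dots>p_{\rho(m)-1}$ and put $\alpha_i=3m-p_i$. Let $k=(6m-1)\rho(m)$, $\mu_i=\lfloor k/p_i\rfloor$, $\beta_i=k-p_i\mu_i$. Define weights $\bar a_j$, $1\le j\le k$: if $\rho(m)$ is even, $\bar a_j=2$ if $j=\ell p_i$ for some $i$ and some $\ell$ with $1\le \ell\le 3\rho(m)/2$, $\bar a_j=-2$ if $j=\ell p_i$ with $3\rho(m)/2<\ell\le 2\rho(m)$, and $\bar a_j=0$ otherwise; if $\rho(m)$ is odd, $\bar a_j=2$ if $j=\ell p_i$ with $1\le\ell\le (3\rho(m)-1)/2$, $\bar a_j=-2$ if $j=\ell p_i$ with $(3\rho(m)+1)/2\le \ell\le 2\rho(m)-2$, $\bar a_j=-1$ if $j=\ell p_i$ with $\ell\in\{2\rho(m)-1,2\rho(m)\}$, and $\bar a_j=0$ otherwise (well defined since the sets $\{\ell p_i:1\le\ell\le2\rho(m)\}$ are pairwise disjoint). Let $\bar\theta=2\rho(m)$. For each $i$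 define $x^{\alpha_i}(t)$ for $0\le t\le k-1$ by $x^{\alpha_i}(t)=1$ if $t=\beta_i+\ell p_i$ for some $0\le \ell\le\mu_i-1$ and $x^{\alpha_i}(t)=0$ otherwise, and for $t\ge k$ by $x^{\alpha_i}(t)=\mathbf 1\big[\sum_{j=1}^k \bar a_j x^{\alpha_i}(t-j)-\bar\theta\big]$. Let $h=\rho(m)k$. For $1\le f\le h$ let $b_f=\bar a_j$ if $f=\rho(m)j$ with $1\le j\le k$, and $b_f=0$ otherwise. Define $(y(n))_{n\ge0}$ by $y(\rho(m)j+i)=x^{\alpha_i}(1+j)$ for $0\le j\le k-1$, $0\le i\le\rho(m)-1$, and $y(n)=\mathbf 1\big[\sum_{f=1}^h b_f y(n-f)-\bar\theta\big]$ for $n\ge h$. Let $L_1(d)=\rho(m)\cdot\mathrm{lcm}(p_0,\dots,p_d)$ for $0\le d\le\rho(m)-1$. For $0\le d\le\rho(m)-1$ define $(w(n,d))_{n\ge0}$ by: for $0\le i\le d$, $w(\rho(m)j+i,d)=x^{\alpha_i}(1+j)$ for $0\le j\le k-2$ and $w(\rho(m)(k-1)+i,d)=1-x^{\alpha_i}(k)$; for $d+1\le i\le\rho(m)-1$ and $0\le j\le k-1$, $w(\rho(m)j+i,d)=y(\rho(m)j+i+L_1(d))$; and $w(n,d)=\mathbf 1\big[\sum_{f=1}^h b_f w(n-f,d)-\bar\theta\big]$ for $n\ge h$. For $0\le d\le\rho(m)-1$ let $B_0(d)=\{f\in\mathbb Z:\ 1\le f\le h-d,\ y(h+L_1(d)-\rho(m)-f)=1\}$,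 $B_{\ell+1}(d)=\{1+f: f\in B_\ell(d)\}$ for $\ell\ge0$, $A(d)=\bigcup_{\ell=0}^{d}B_\ell(d)$, and $Tot(d)=|B_0(d)|$. Fix a real number $\lambda$ with $-1\le\lambda<0$. Put $\beta(d)=\lambda/Tot(d)$, $\xi(d)=\lambda-\beta(d)/8$, $\theta_2(d)=\bar\theta+\xi(d)$, and for $1\le f\le h$ let $c(f,d)=b_f+\beta(d)$ if $f\in A(d)$ and $c(f,d)=b_f$ otherwise. Define $(z(n,d))_{n\ge0}$ by $z(n,d)=y(n)$ for $0\le n\le h-1$ and $z(n,d)=\mathbf 1\big[\sum_{f=1}^h c(f,d)\,z(n-f,d)-\theta_2(d)\big]$ for $n\ge h$. *)

theory Defs
  imports Complex_Main "HOL-Computational_Algebra.Primes"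
begin

definition step :: "real \<Rightarrow> real" where
  "step u = (if u \<ge> 0 then 1 else 0)"

function thr :: "nat \<Rightarrow> (nat \<Rightarrow> real) \<Rightarrow> real \<Rightarrow> (nat \<Rightarrow> real) \<Rightarrow> nat \<Rightarrow> real" where
  "thr K a th init n =
     (if n < K then init n
      else step ((\<Sum>j\<in>{1..K}. a j * thr K a th init (n - j)) - th))"
  by pat_completeness auto
termination
  by (relation "measure (\<lambda>(K, a, th, init, n). n)") auto

definition Pset :: "nat \<Rightarrow> nat set" where
  "Pset m = {p. prime p \<and> 2 * m < p \<and> p < 3 * m}"

definition rho :: "nat \<Rightarrow> nat" where
  "rho m = card (Pset m)"

definition pr :: "nat \<Rightarrow> nat \<Rightarrow> nat" where
  "pr m i = rev (sorted_list_of_set (Pset m)) ! i"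

definition kk :: "nat \<Rightarrow> nat" where
  "kk m = (6 * m - 1) * rho m"

definition mu :: "nat \<Rightarrow> nat \<Rightarrow> nat" where
  "mu m i = kk m div pr m i"

definition beta0 :: "nat \<Rightarrow> nat \<Rightarrow> nat" where
  "beta0 m i = kk m - pr m i * mu m i"

definition abar :: "nat \<Rightarrow> nat \<Rightarrow> real" where
  "abar m j =
    (let r = rho m;
         M = (\<lambda>P. \<exists>i<r. \<exists>l. P l \<and> j = l * pr m i) in
     if even r then
       (if M (\<lambda>l. 1 \<le> l \<and> 2 * l \<le> 3 * r) then 2
        else if M (\<lambda>l. 3 * r < 2 * l \<and> l \<le> 2 * r) then -2
        else 0)
     else
       (if M (\<lambda>l. 1 \<le> l \<and> 2 * l \<le> 3 * r - 1) then 2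
        else if M (\<lambda>l. 3 * r + 1 \<le> 2 * l \<and> l \<le> 2 * r - 2) then -2
        else if M (\<lambda>l. l = 2 * r - 1 \<or> l = 2 * r) then -1
        else 0))"

definition thetabar :: "nat \<Rightarrow> real" where
  "thetabar m = 2 * real (rho m)"

definition xx :: "nat \<Rightarrow> nat \<Rightarrow> nat \<Rightarrow> real" where
  "xx m i = thr (kk m) (abar m) (thetabar m)
     (\<lambda>t. if \<exists>l. l < mu m i \<and> t = beta0 m i + l * pr m i then 1 else 0)"

definition hh :: "nat \<Rightarrow> nat" where
  "hh m = rho m * kk m"

definition bb :: "nat \<Rightarrow> nat \<Rightarrow> real" where
  "bb m f = (if \<exists>j. 1 \<le> j \<and> j \<le> kk m \<and> f = rho m * j then abar m (f div rho m) else 0)"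

definition yy :: "nat \<Rightarrow> nat \<Rightarrow> real" where
  "yy m = thr (hh m) (bb m) (thetabar m)
     (\<lambda>n. xx m (n mod rho m) (1 + n div rho m))"

definition L1 :: "nat \<Rightarrow> nat \<Rightarrow> nat" where
  "L1 m d = rho m * Lcm (pr m ` {0..d})"

definition ww :: "nat \<Rightarrow> nat \<Rightarrow> nat \<Rightarrow> real" where
  "ww m d = thr (hh m) (bb m) (thetabar m)
     (\<lambda>n. let i = n mod rho m; j = n div rho m in
          if i \<le> d then
            (if j \<le> kk m - 2 then xx m i (1 + j) else 1 - xx m i (kk m))
          else yy m (n + L1 m d))"

definition B0 :: "nat \<Rightarrow> nat \<Rightarrow> nat set" where
  "B0 m d = {f. 1 \<le> f \<and> f \<le> hh m - d \<and> yy m (hh m + L1 m d - rho m - f) = 1}"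

definition Bl :: "nat \<Rightarrow> nat \<Rightarrow> nat \<Rightarrow> nat set" where
  "Bl m d l = (\<lambda>f. l + f) ` B0 m d"

definition AA :: "nat \<Rightarrow> nat \<Rightarrow> nat set" where
  "AA m d = (\<Union>l\<in>{0..d}. Bl m d l)"

definition Tot :: "nat \<Rightarrow> nat \<Rightarrow> nat" where
  "Tot m d = card (B0 m d)"

definition betad :: "nat \<Rightarrow> real \<Rightarrow> nat \<Rightarrow> real" where
  "betad m lam d = lam / real (Tot m d)"

definition xi :: "nat \<Rightarrow> real \<Rightarrow> nat \<Rightarrow> real" where
  "xi m lam d = lam - betad m lam d / 8"

definition theta2 :: "nat \<Rightarrow> real \<Rightarrow> nat \<Rightarrow> real" where
  "theta2 m lam d = thetabar m + xi m lam d"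

definition cc :: "nat \<Rightarrow> real \<Rightarrow> nat \<Rightarrow> nat \<Rightarrow> real" where
  "cc m lam f d = (if f \<in> AA m d then bb m f + betad m lam d else bb m f)"

definition zz :: "nat \<Rightarrow> real \<Rightarrow> nat \<Rightarrow> nat \<Rightarrow> real" where
  "zz m lam d = thr (hh m) (\<lambda>f. cc m lam f d) (theta2 m lam d) (yy m)"

end

theory Submission
  imports Defs
begin

text \<open>
  Everything rests on closed forms. For \<open>i < \<rho>\<close> the multiples \<open>l p_i\<close>, \<open>1 \<le> l \<le> 2\<rho>\<close>, are
  pairwise distinct and exhaust the support of \<open>abar\<close>, with \<open>abar (l p_i) = wt \<rho> l\<close>; the profile
  \<open>wt\<close> sums to the threshold \<open>2\<rho>\<close> and each nonempty prefix of it sums to at least \<open>2\<close>. Hence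
  the indicator of a residue class modulo \<open>p_i\<close> is a fixed point of the base recurrence, which
  gives \<open>x^{\<alpha>_i}(t) = [t \<equiv> k (mod p_i)]\<close> and a closed form \<open>y_on\<close> for the interleaved \<open>y\<close>.

  For the level \<open>d\<close> let \<open>ycut\<close> be \<open>y\<close> with the ones on the tracks \<open>c \<le> d\<close> deleted from position
  \<open>n0 = h + L_1(d) - \<rho>\<close> on. Then (1) \<open>w(n, d) = ycut(n + L_1(d))\<close>: \<open>ycut\<close> obeys the unperturbed
  recurrence except at the flip positions \<open>n0 + c\<close>, which the shifted \<open>w\<close> never reaches; and
  (2) \<open>z(n, d) = ycut(n)\<close>: counting the window hits in \<open>A(d)\<close> against \<open>Tot(d)\<close> shows that the
  perturbation \<open>\<beta>(d)\<close>, \<open>\<xi>(d)\<close> corrects exactly the flip positions and changes no other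
  decision. The theorem follows because its two arguments differ by \<open>L_1(d)\<close>.
\<close>

text \<open>The defining equation of \<open>thr\<close> would unfold indefinitely under the simplifier; it is
  used only through the two cases below: initial values below the order, one threshold step
  from the order on.\<close>

declare thr.simps [simp del]

lemma thr_init: "n < K \<Longrightarrow> thr K a th init n = init n"
  by (subst thr.simps) simp

lemma thr_rec:
  "K \<le> n \<Longrightarrow> thr K a th init n = step ((\<Sum>j\<in>{1..K}. a j * thr K a th init (n - j)) - th)"
  by (subst thr.simps) simp

lemma mod_diff_self_iff: "(a::nat) \<le> T \<Longrightarrow> (T - a) mod q = T mod q \<longleftrightarrow> q dvd a"
  by (metis diff_diff_cancel mod_eq_dvd_iff_nat diff_le_self)

lemma mod_diff_diff_iff:
  "(a::nat) \<le> T \<Longrightarrow> b \<le> T \<Longrightarrow> (T - a) mod q = (T - b) mod q \<longleftrightarrow> int q dvd int a - int b"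
  by (smt (verit, best) dvd_nat_abs_iff mod_eq_iff_dvd_symdiff_nat of_nat_diff_if)

lemma Suc_mod_eq_iff: "(k::nat) \<ge> 1 \<Longrightarrow> (1 + t) mod q = k mod q \<longleftrightarrow> t mod q = (k - 1) mod q"
  by (smt (verit, ccfv_SIG) int_ops(4) mod_eq_iff_dvd_symdiff_nat
    of_nat_diff of_nat_le_1_iff one_of_nat_le_iff plus_1_eq_Suc)

lemma nat_mod_eq_if_int_dvd: "int q dvd int a - int b \<Longrightarrow> a mod q = b mod q"
  by (metis mod_eq_dvd_iff of_nat_eq_iff zmod_int)

lemma mixed_radix_dvd:
  "(P1::nat) mod r = P2 mod r \<Longrightarrow> (P1 div r) mod q = (P2 div r) mod q \<Longrightarrow> int (r * q) dvd int P1 - int P2"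
  by (metis int_ops(9) mod_eq_dvd_iff mod_mult2_eq)

text \<open>Used to express \<open>(h - 1) div (\<rho> p)\<close> through \<open>(k - 1) div p\<close>.\<close>

lemma mult_minus_one_div: "0 < (r::nat) \<Longrightarrow> 1 \<le> k \<Longrightarrow> (r * k - 1) div r = k - 1"
proof -
  assume r: "0 < r" and k: "1 \<le> k"
  obtain k' where k': "k = Suc k'" using k by (cases k) auto
  have e: "r * k - 1 = (r - 1) + k' * r" using r k' by (simp add: algebra_simps)
  have "((r - 1) + k' * r) div r = k' + (r - 1) div r" using r by (simp only: div_mult_self1 neq0_conv)
  then show ?thesis using k' r e by simp
qed

lemma small_common_multiple_zero:
  fixes x :: int and a b b' :: nat
  assumes d1: "int (a * b) dvd x" and d2: "int (a * b') dvd x" and cop: "coprime b b'"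
    and a: "a > 0" and small: "\<bar>x\<bar> < int (a * b * b')"
  shows "x = 0"
proof -
  obtain y where y: "x = int a * int b * y" using d1 by (auto simp: dvd_def)
  have "int a * int b' dvd int a * (int b * y)" using d2 y by (simp add: mult.assoc)
  then have "int b' dvd int b * y" using a by simp
  moreover have "coprime (int b') (int b)" using cop by (simp add: coprime_commute)
  ultimately have "int b' dvd y" using coprime_dvd_mult_right_iff by blast
  then obtain z where z: "y = int b' * z" by (auto simp: dvd_def)
  have xz: "x = int (a * b * b') * z" using y z by (simp add: algebra_simps)
  show "x = 0"
  proof (rule ccontr)
    assume "x \<noteq> 0"
    then have "z \<noteq> 0" using xz by auto
    then have "1 \<le> \<bar>z\<bar>" by simp
    then have "int (a * b * b') * 1 \<le> int (a * b * b') * \<bar>z\<bar>" by (intro mult_left_mono) auto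
    then show False using small xz by (simp add: abs_mult)
  qed
qed

lemma card_residue_class_le:
  fixes S :: "nat set"
  assumes sub: "S \<subseteq> {a..<a+L}" and q: "q > 0" and cls: "\<forall>x\<in>S. x mod q = s"
  shows "card S \<le> (L - 1) div q + 1"
proof -
  have inj: "inj_on (\<lambda>x. (x - a) div q) S"
  proof (rule inj_onI)
    fix x y assume x: "x \<in> S" and y: "y \<in> S" and e: "(x - a) div q = (y - a) div q"
    have a: "a \<le> x" "a \<le> y" using x y sub by auto
    have "(a + (x - a)) mod q = (a + (y - a)) mod q" using a cls x y by simp
    then have "(x - a) mod q = (y - a) mod q" by (simp add: nat_mod_eq_iff)
    then have "x - a = y - a" using e by (metis div_mult_mod_eq)
    then show "x = y" using a by simp
  qed
  have "(\<lambda>x. (x - a) div q) ` S \<subseteq> {..(L - 1) div q}"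
  proof
    fix z assume "z \<in> (\<lambda>x. (x - a) div q) ` S"
    then obtain x where x: "x \<in> S" "z = (x - a) div q" by auto
    then have "x - a \<le> L - 1" using sub by fastforce
    then show "z \<in> {..(L - 1) div q}" using x by (simp add: div_le_mono)
  qed
  then have "card S \<le> card {..(L - 1) div q}"
    using card_inj_on_le[OF inj] by blast
  then show ?thesis by simp
qed

lemma card_residue_class_ge:
  fixes a L q s :: nat
  assumes q: "q > 0" and s: "s < q"
  shows "L div q \<le> card {x \<in> {a..<a+L}. x mod q = s}"
proof -
  define off where "off = (s + (q - a mod q)) mod q"
  have off: "off < q" using q unfolding off_def by simp
  have "(a + off) mod q = (a mod q + (s + (q - a mod q))) mod q"
    unfolding off_def by (metis mod_add_eq mod_mod_trivial)
  also have "a mod q + (s + (q - a mod q)) = s + q"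
    using q by (metis add.commute add.left_commute le_add_diff_inverse less_imp_le_nat mod_less_divisor)
  finally have off_cls: "(a + off) mod q = s" using s by simp
  define g where "g i = a + off + i * q" for i
  have inj: "inj_on g {..< L div q}" unfolding g_def using q by (simp add: inj_on_def)
  have "g ` {..< L div q} \<subseteq> {x \<in> {a..<a+L}. x mod q = s}"
  proof
    fix x assume "x \<in> g ` {..< L div q}"
    then obtain i where i: "i < L div q" "x = g i" by auto
    have "Suc i * q \<le> L div q * q" using i by (intro mult_le_mono1) simp
    also have "\<dots> \<le> L" by simp
    finally have "off + i * q < L" using off by simp
    then show "x \<in> {x \<in> {a..<a+L}. x mod q = s}" using i off_cls unfolding g_def by simp
  qed
  then have "card (g ` {..< L div q}) \<le> card {x \<in> {a..<a+L}. x mod q = s}"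
    by (intro card_mono) auto
  then show ?thesis using card_image[OF inj] by simp
qed

text \<open>The weight profile: \<open>abar m (l * p_i) = wt \<rho> l\<close> for \<open>1 \<le> l \<le> 2\<rho>\<close>, whatever the prime
  \<open>p_i\<close> (see \<open>abar_multiple\<close> below).\<close>

definition wt :: "nat \<Rightarrow> nat \<Rightarrow> real" where
  "wt r l =
    (if even r then
       (if 1 \<le> l \<and> 2 * l \<le> 3 * r then 2 else if 3 * r < 2 * l \<and> l \<le> 2 * r then -2 else 0)
     else
       (if 1 \<le> l \<and> 2 * l \<le> 3 * r - 1 then 2 else if 3 * r + 1 \<le> 2 * l \<and> l \<le> 2 * r - 2 then -2
        else if l = 2 * r - 1 \<or> l = 2 * r then -1 else 0))"

lemma wt_le2: "wt r l \<le> 2"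
  by (simp add: wt_def)

lemma wt_prefix_even:
  assumes "r = 2 * a" "a \<ge> 1"
  shows "g \<le> 2 * r \<Longrightarrow> (\<Sum>l\<in>{1..g}. wt r l) =
    (if g \<le> 3 * a then 2 * real g else 12 * real a - 2 * real g)"
proof (induction g)
  case 0 then show ?case by simp
next
  case (Suc g)
  then have IH: "(\<Sum>l\<in>{1..g}. wt r l) =
    (if g \<le> 3 * a then 2 * real g else 12 * real a - 2 * real g)" by simp
  have "(\<Sum>l\<in>{1..Suc g}. wt r l) = (\<Sum>l\<in>{1..g}. wt r l) + wt r (Suc g)" by simp
  also have "wt r (Suc g) = (if Suc g \<le> 3 * a then 2 else -2)"
    using Suc.prems assms by (simp add: wt_def)
  finally show ?case using IH by (auto simp: field_simps)
qed

lemma wt_prefix_odd: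
  assumes "r = 2 * a + 1" "a \<ge> 1"
  shows "g \<le> 2 * r \<Longrightarrow> (\<Sum>l\<in>{1..g}. wt r l) =
    (if g \<le> 3 * a + 1 then 2 * real g else if g \<le> 4 * a then 12 * real a + 4 - 2 * real g
     else if g = 4 * a + 1 then 4 * real a + 3 else 4 * real a + 2)"
proof (induction g)
  case 0 then show ?case by simp
next
  case (Suc g)
  then have IH: "(\<Sum>l\<in>{1..g}. wt r l) =
    (if g \<le> 3 * a + 1 then 2 * real g else if g \<le> 4 * a then 12 * real a + 4 - 2 * real g
     else if g = 4 * a + 1 then 4 * real a + 3 else 4 * real a + 2)" by simp
  have "(\<Sum>l\<in>{1..Suc g}. wt r l) = (\<Sum>l\<in>{1..g}. wt r l) + wt r (Suc g)" by simp
  also have "wt r (Suc g) = (if Suc g \<le> 3 * a + 1 then 2 else if Suc g \<le> 4 * a then -2 else -1)"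
    using Suc.prems assms by (simp add: wt_def)
  finally show ?case using IH Suc.prems assms by (auto simp: field_simps)
qed

text \<open>The full profile sums to the threshold \<open>2r\<close>, and every nonempty prefix sums to at
  least \<open>2\<close>; these two facts drive all threshold decisions below.\<close>

lemma wt_prefix_bounds:
  assumes r: "r \<ge> 2"
  shows "(\<Sum>l\<in>{1..2 * r}. wt r l) = 2 * real r
    \<and> (\<forall>g. 1 \<le> g \<and> g \<le> 2 * r \<longrightarrow> (\<Sum>l\<in>{1..g}. wt r l) \<ge> 2)"
proof (cases "even r")
  case True
  then obtain a where a: "r = 2 * a" by blast
  with r have "a \<ge> 1" by simp
  note ps = wt_prefix_even[OF a this]
  have "(\<Sum>l\<in>{1..g}. wt r l) \<ge> 2" if "1 \<le> g" "g \<le> 2 * r" for g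
    using ps[OF that(2)] a that by auto
  moreover have "(\<Sum>l\<in>{1..2 * r}. wt r l) = 2 * real r" using ps[of "2 * r"] a by simp
  ultimately show ?thesis by blast
next
  case False
  then obtain a where a: "r = 2 * a + 1" using oddE by blast
  with r have "a \<ge> 1" by simp
  note ps = wt_prefix_odd[OF a this]
  have "(\<Sum>l\<in>{1..g}. wt r l) \<ge> 2" if "1 \<le> g" "g \<le> 2 * r" for g
    using ps[OF that(2)] a that by auto
  moreover have "(\<Sum>l\<in>{1..2 * r}. wt r l) = 2 * real r" using ps[of "2 * r"] a by simp
  ultimately show ?thesis by blast
qed

lemma wt_total: "r \<ge> 2 \<Longrightarrow> (\<Sum>l\<in>{1..2 * r}. wt r l) = 2 * real r"
  using wt_prefix_bounds by blast

lemma wt_prefix_ge2: "r \<ge> 2 \<Longrightarrow> 1 \<le> g \<Longrightarrow> g \<le> 2 * r \<Longrightarrow> (\<Sum>l\<in>{1..g}. wt r l) \<ge> 2"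
  using wt_prefix_bounds by blast

lemma wt_tail_le:
  assumes r: "r \<ge> 2" and q: "1 \<le> q"
  shows "(\<Sum>l\<in>{1..2 * r}. wt r l * (if q < l then 1 else 0)) \<le> 2 * real r - 2"
proof -
  have "(\<Sum>l\<in>{1..2 * r}. wt r l * (if q < l then 1 else 0))
      = (\<Sum>l\<in>{1..2 * r}. wt r l) - (\<Sum>l\<in>{1..2 * r}. if l \<le> q then wt r l else 0)"
    unfolding sum_subtractf[symmetric] by (rule sum.cong) auto
  also have "(\<Sum>l\<in>{1..2 * r}. if l \<le> q then wt r l else 0) = (\<Sum>l\<in>{l\<in>{1..2 * r}. l \<le> q}. wt r l)"
    by (rule sum.inter_filter[symmetric]) simp
  also have "{l\<in>{1..2 * r}. l \<le> q} = {1..min q (2 * r)}" by auto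
  finally have e: "(\<Sum>l\<in>{1..2 * r}. wt r l * (if q < l then 1 else 0))
      = 2 * real r - (\<Sum>l\<in>{1..min q (2 * r)}. wt r l)"
    using wt_total[OF r] by simp
  have "(\<Sum>l\<in>{1..min q (2 * r)}. wt r l) \<ge> 2" using wt_prefix_ge2[OF r] q r by simp
  then show ?thesis using e by simp
qed

lemma Pset_finite: "finite (Pset m)"
  unfolding Pset_def by (rule finite_subset[of _ "{..<3*m}"]) auto

locale prime_band =
  fixes m :: nat
  assumes m_pos: "m \<ge> 1" and r_ge2: "rho m \<ge> 2"
begin

abbreviation "r \<equiv> rho m"
abbreviation "p \<equiv> pr m"
abbreviation "k \<equiv> kk m"
abbreviation "h \<equiv> hh m"

lemma k_eq: "k = (6 * m - 1) * r" by (simp add: kk_def)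
lemma h_eq: "h = r * k" by (simp add: hh_def)
lemma r_pos: "r > 0" using r_ge2 by simp

lemma p_in_Pset: "i < r \<Longrightarrow> p i \<in> Pset m"
proof -
  assume "i < r"
  then have "rev (sorted_list_of_set (Pset m)) ! i \<in> set (rev (sorted_list_of_set (Pset m)))"
    by (intro nth_mem) (simp add: rho_def Pset_finite)
  then show ?thesis by (simp add: pr_def Pset_finite)
qed

lemma p_prime: "i < r \<Longrightarrow> prime (p i)" using p_in_Pset by (simp add: Pset_def)
lemma p_lo: "i < r \<Longrightarrow> 2 * m < p i" using p_in_Pset by (simp add: Pset_def)
lemma p_hi: "i < r \<Longrightarrow> p i < 3 * m" using p_in_Pset by (simp add: Pset_def)
lemma p_pos: "i < r \<Longrightarrow> p i > 0" using p_lo by fastforce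

lemma p_inj: "i < r \<Longrightarrow> j < r \<Longrightarrow> p i = p j \<Longrightarrow> i = j"
  unfolding pr_def
  by (metis distinct_rev distinct_sorted_list_of_set nth_eq_iff_index_eq length_rev
      length_sorted_list_of_set rho_def)

lemma p_coprime: "i < r \<Longrightarrow> j < r \<Longrightarrow> i \<noteq> j \<Longrightarrow> coprime (p i) (p j)"
  using p_inj p_prime primes_coprime by blast

text \<open>The primes in \<open>(2m, 3m)\<close> are odd, so \<open>q \<mapsto> q div 2 - m\<close> maps them injectively into
  \<open>{..< m div 2}\<close>; hence \<open>2\<rho> \<le> m\<close>.\<close>

lemma r_bound: "2 * r \<le> m"
proof -
  have odd: "odd q" if "q \<in> Pset m" for q
    using that m_pos unfolding Pset_def by (intro prime_odd_nat) auto
  have "inj_on (\<lambda>q. q div 2 - m) (Pset m)"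
  proof (rule inj_onI)
    fix x y assume x: "x \<in> Pset m" and y: "y \<in> Pset m" and e: "x div 2 - m = y div 2 - m"
    have "x div 2 \<ge> m" "y div 2 \<ge> m" using x y unfolding Pset_def by auto
    then have "x div 2 = y div 2" using e by simp
    then show "x = y" using odd[OF x] odd[OF y] by (metis odd_two_times_div_two_succ)
  qed
  moreover have "(\<lambda>q. q div 2 - m) ` Pset m \<subseteq> {..< m div 2}"
  proof
    fix z assume "z \<in> (\<lambda>q. q div 2 - m) ` Pset m"
    then obtain q where q: "q \<in> Pset m" "z = q div 2 - m" by auto
    have "2 * m < q" "q < 3 * m" using q unfolding Pset_def by auto
    with odd[OF q(1)] have "q div 2 - m < m div 2" by (elim oddE) presburger
    then show "z \<in> {..< m div 2}" using q(2) by simp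
  qed
  ultimately have "card (Pset m) \<le> card {..< m div 2}"
    by (meson card_inj_on_le finite_lessThan)
  then show ?thesis by (simp add: rho_def)
qed

lemma two_r_lt_p: "i < r \<Longrightarrow> 2 * r < p i"
  using r_bound p_lo[of i] by linarith

lemma window_room: "i < r \<Longrightarrow> 2 * r * p i + r \<le> k"
proof -
  assume i: "i < r"
  have "2 * p i \<le> 6 * m - 2" using p_hi[OF i] by linarith
  then have "r * (2 * p i) \<le> r * (6 * m - 2)" by (rule mult_le_mono2)
  moreover have "r * (6 * m - 2) + r = k" using m_pos by (simp add: k_eq algebra_simps)
  ultimately show ?thesis by (simp add: algebra_simps)
qed

lemma k_le_prime_product: "i < r \<Longrightarrow> j < r \<Longrightarrow> k \<le> p i * p j"
proof -
  assume i: "i < r" and j: "j < r"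
  have a: "(2 * m + 1) * (2 * m + 1) \<le> p i * p j"
    using p_lo[OF i] p_lo[OF j] by (intro mult_le_mono) auto
  have "2 * k = (6 * m - 1) * (2 * r)" by (simp add: k_eq)
  also have "\<dots> \<le> (6 * m - 1) * m" using r_bound by (intro mult_le_mono2)
  also have "\<dots> \<le> 2 * ((2 * m + 1) * (2 * m + 1))" by (simp add: algebra_simps diff_mult_distrib)
  finally show ?thesis using a by linarith
qed

lemma k_ge2: "k \<ge> 2" using window_room[OF r_pos] r_ge2 by linarith

lemma multiple_le: "i < r \<Longrightarrow> l \<le> 2 * r \<Longrightarrow> k \<le> T \<Longrightarrow> l * p i \<le> T"
proof -
  assume a: "i < r" "l \<le> 2 * r" "k \<le> T"
  have "l * p i \<le> 2 * r * p i" using a by simp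
  also have "\<dots> \<le> k" using window_room[OF a(1)] by simp
  finally show ?thesis using a by simp
qed

text \<open>The sets \<open>{l p_i : 1 \<le> l \<le> 2\<rho>}\<close> are pairwise disjoint (this is why \<open>abar\<close> is well
  defined): \<open>p_i\<close> would have to divide some \<open>l' \<le> 2\<rho> < p_i\<close>.\<close>

lemma multiple_unique:
  assumes i: "i < r" and i': "i' < r" and l': "1 \<le> l'" "l' \<le> 2 * r" and l: "1 \<le> l"
    and e: "l * p i = l' * p i'"
  shows "i' = i \<and> l' = l"
proof -
  have "i' = i"
  proof (rule ccontr)
    assume "i' \<noteq> i"
    then have "coprime (p i) (p i')" using p_coprime i i' by auto
    moreover have "p i dvd l' * p i'" using e by (metis dvd_triv_right)
    ultimately have "p i dvd l'" using coprime_dvd_mult_left_iff by blast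
    then have "p i \<le> l'" using l' by (simp add: dvd_imp_le)
    then show False using two_r_lt_p[OF i] l' by linarith
  qed
  then show ?thesis using e p_pos[OF i] by simp
qed

lemma multiple_pattern_iff:
  assumes i: "i < r" and l: "1 \<le> l" "l \<le> 2 * r"
    and bnd: "\<And>l'. P l' \<Longrightarrow> 1 \<le> l' \<and> l' \<le> 2 * r"
  shows "(\<exists>i'<r. \<exists>l'. P l' \<and> l * p i = l' * p i') \<longleftrightarrow> P l"
proof
  assume "\<exists>i'<r. \<exists>l'. P l' \<and> l * p i = l' * p i'"
  then obtain i' l' where "i' < r" "P l'" "l * p i = l' * p i'" by blast
  then show "P l" using multiple_unique[OF i, of i' l' l] bnd[of l'] l by auto
next
  assume "P l" then show "\<exists>i'<r. \<exists>l'. P l' \<and> l * p i = l' * p i'" using i by blast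
qed

lemma abar_multiple:
  assumes i: "i < r" and l: "1 \<le> l" "l \<le> 2 * r"
  shows "abar m (l * p i) = wt r l"
proof -
  note M = multiple_pattern_iff[OF i l]
  have e1: "(\<exists>i'<r. \<exists>l'. (1 \<le> l' \<and> 2 * l' \<le> 3 * r) \<and> l * p i = l' * p i')
      \<longleftrightarrow> (1 \<le> l \<and> 2 * l \<le> 3 * r)"
    by (rule M) auto
  have e2: "(\<exists>i'<r. \<exists>l'. (3 * r < 2 * l' \<and> l' \<le> 2 * r) \<and> l * p i = l' * p i')
      \<longleftrightarrow> (3 * r < 2 * l \<and> l \<le> 2 * r)"
    by (rule M) auto
  have e3: "(\<exists>i'<r. \<exists>l'. (1 \<le> l' \<and> 2 * l' \<le> 3 * r - 1) \<and> l * p i = l' * p i')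
      \<longleftrightarrow> (1 \<le> l \<and> 2 * l \<le> 3 * r - 1)"
    by (rule M) auto
  have e4: "(\<exists>i'<r. \<exists>l'. (3 * r + 1 \<le> 2 * l' \<and> l' \<le> 2 * r - 2) \<and> l * p i = l' * p i')
      \<longleftrightarrow> (3 * r + 1 \<le> 2 * l \<and> l \<le> 2 * r - 2)"
    by (rule M) auto
  have e5: "(\<exists>i'<r. \<exists>l'. (l' = 2 * r - 1 \<or> l' = 2 * r) \<and> l * p i = l' * p i')
      \<longleftrightarrow> (l = 2 * r - 1 \<or> l = 2 * r)"
    by (rule M) (use r_ge2 in auto)
  show ?thesis unfolding abar_def Let_def wt_def
    by (simp only: e1 e2 e3 e4 e5)
qed

lemma abar_support: "abar m j \<noteq> 0 \<Longrightarrow> \<exists>i<r. \<exists>l. 1 \<le> l \<and> l \<le> 2 * r \<and> j = l * p i"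
  unfolding abar_def Let_def
  apply (simp only: split: if_splits)
  apply ((rule_tac x=i in exI, simp, rule_tac x=l in exI, use r_ge2 in linarith)+)[5]
  done

lemma window_sum:
  "(\<Sum>j\<in>{1..k}. abar m j * u (T - j)) = (\<Sum>i<r. \<Sum>l\<in>{1..2 * r}. wt r l * u (T - l * p i))"
proof -
  define I where "I = {..<r} \<times> {1..2 * r}"
  define G where "G = (\<lambda>(i, l). l * p i) ` I"
  have sub: "G \<subseteq> {1..k}"
  proof
    fix j assume "j \<in> G"
    then obtain i l where il: "i < r" "1 \<le> l" "l \<le> 2 * r" "j = l * p i"
      unfolding G_def I_def by auto
    then show "j \<in> {1..k}" using multiple_le[OF il(1,3) order_refl] p_pos[OF il(1)] by simp
  qed
  have zero: "\<forall>j\<in>{1..k} - G. abar m j * u (T - j) = 0"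
    using abar_support unfolding G_def I_def by force
  have inj: "inj_on (\<lambda>(i, l). l * p i) I"
    unfolding I_def by (rule inj_onI) (use multiple_unique in fastforce)
  have "(\<Sum>j\<in>{1..k}. abar m j * u (T - j)) = (\<Sum>j\<in>G. abar m j * u (T - j))"
    by (rule sum.mono_neutral_right[OF _ sub zero]) simp
  also have "\<dots> = (\<Sum>x\<in>I. abar m (snd x * p (fst x)) * u (T - snd x * p (fst x)))"
    unfolding G_def by (subst sum.reindex[OF inj]) (simp add: case_prod_beta)
  also have "\<dots> = (\<Sum>x\<in>I. wt r (snd x) * u (T - snd x * p (fst x)))"
    unfolding I_def by (rule sum.cong) (auto simp: abar_multiple)
  also have "\<dots> = (\<Sum>i<r. \<Sum>l\<in>{1..2 * r}. wt r l * u (T - l * p i))"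
    unfolding I_def by (simp add: sum.cartesian_product case_prod_beta)
  finally show ?thesis .
qed

lemma cross_multiples_eq:
  assumes i: "i < r" and i': "i' < r" and ne: "i' \<noteq> i" and l1: "l1 \<le> 2 * r" and l2: "l2 \<le> 2 * r"
    and d: "int (p i) dvd int (l1 * p i') - int (l2 * p i')"
  shows "l1 = l2"
proof (rule ccontr)
  assume "l1 \<noteq> l2"
  have "int (l1 * p i') - int (l2 * p i') = (int l1 - int l2) * int (p i')"
    by (simp add: algebra_simps)
  moreover have "coprime (int (p i)) (int (p i'))" using p_coprime[OF i i'] ne by simp
  ultimately have "int (p i) dvd int l1 - int l2" using d by (metis coprime_dvd_mult_left_iff)
  moreover have "int l1 - int l2 \<noteq> 0" using \<open>l1 \<noteq> l2\<close> by simp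
  ultimately have "\<bar>int (p i)\<bar> \<le> \<bar>int l1 - int l2\<bar>" using dvd_imp_le_int by blast
  then show False using two_r_lt_p[OF i] l1 l2 by linarith
qed

text \<open>If the current time is off the class, the prime \<open>p_i\<close> contributes nothing and every other
  prime sees at most one point of the class, so the sum is at most \<open>2(\<rho> - 1)\<close>.\<close>

lemma window_off_class:
  assumes i: "i < r" and T: "k \<le> T" and u01: "\<forall>t. u t = 0 \<or> u t = 1"
    and us: "\<forall>t. u t = 1 \<longrightarrow> t mod p i = s" and Ts: "T mod p i \<noteq> s"
  shows "(\<Sum>j\<in>{1..k}. abar m j * u (T - j)) \<le> 2 * (real r - 1)"
proof -
  define inner where "inner i' = (\<Sum>l\<in>{1..2 * r}. wt r l * u (T - l * p i'))" for i'
  have own: "inner i = 0" unfolding inner_def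
  proof (rule sum.neutral, rule ballI)
    fix l assume l: "l \<in> {1..2 * r}"
    have "(T - l * p i) mod p i = T mod p i"
      using mod_diff_self_iff[OF multiple_le[OF i _ T]] l by simp
    then have "u (T - l * p i) \<noteq> 1" using us Ts by metis
    then show "wt r l * u (T - l * p i) = 0" using u01 by (metis mult_zero_right)
  qed
  have other: "inner i' \<le> 2" if i': "i' < r" "i' \<noteq> i" for i'
  proof -
    define Ls where "Ls = {l \<in> {1..2 * r}. u (T - l * p i') = 1}"
    have single: "l1 = l2" if "l1 \<in> Ls" "l2 \<in> Ls" for l1 l2
    proof -
      have "(T - l1 * p i') mod p i = (T - l2 * p i') mod p i" using that us unfolding Ls_def by auto
      then have "int (p i) dvd int (l1 * p i') - int (l2 * p i')"
        using mod_diff_diff_iff[OF multiple_le[OF i'(1) _ T] multiple_le[OF i'(1) _ T]] that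
        unfolding Ls_def by auto
      then show "l1 = l2" using cross_multiples_eq[OF i i'] that unfolding Ls_def by auto
    qed
    have "inner i' = (\<Sum>l\<in>{1..2 * r}. if u (T - l * p i') = 1 then wt r l else 0)"
      unfolding inner_def by (rule sum.cong) (use u01 in \<open>auto\<close>)
    also have "\<dots> = sum (wt r) Ls" unfolding Ls_def by (rule sum.inter_filter[symmetric]) simp
    also have "\<dots> \<le> real (card Ls) * 2" by (rule sum_bounded_above) (simp add: wt_le2)
    also have "card Ls \<le> 1" using single card_le_Suc0_iff_eq[of Ls] unfolding Ls_def by auto
    finally show ?thesis by simp
  qed
  have "(\<Sum>j\<in>{1..k}. abar m j * u (T - j)) = inner i + (\<Sum>i'\<in>{..<r} - {i}. inner i')"
    unfolding inner_def window_sum using i by (simp add: sum.remove)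
  also have "\<dots> \<le> 0 + real (card ({..<r} - {i})) * 2"
    using own by (intro add_mono sum_bounded_above) (auto intro: other)
  also have "\<dots> = 2 * (real r - 1)" using i by (simp add: of_nat_diff)
  finally show ?thesis .
qed

lemma window_on_class:
  assumes i: "i < r" and T: "k \<le> T" and u01: "\<forall>t. u t = 0 \<or> u t = 1"
    and us: "\<forall>t. u t = 1 \<longrightarrow> t mod p i = s" and Ts: "T mod p i = s"
  shows "(\<Sum>j\<in>{1..k}. abar m j * u (T - j)) = (\<Sum>l\<in>{1..2 * r}. wt r l * u (T - l * p i))"
proof -
  define inner where "inner i' = (\<Sum>l\<in>{1..2 * r}. wt r l * u (T - l * p i'))" for i'
  have other: "inner i' = 0" if i': "i' < r" "i' \<noteq> i" for i'
    unfolding inner_def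
  proof (rule sum.neutral, rule ballI)
    fix l assume l: "l \<in> {1..2 * r}"
    have "u (T - l * p i') \<noteq> 1"
    proof
      assume "u (T - l * p i') = 1"
      then have "(T - l * p i') mod p i = T mod p i" using us Ts by auto
      then have "p i dvd l * p i'"
        using mod_diff_self_iff[OF multiple_le[OF i'(1) _ T]] l by auto
      then have "int (p i) dvd int (l * p i') - int (0 * p i')"
        by (simp only: int_dvd_int_iff mult_zero_left of_nat_0 diff_zero)
      then show False using cross_multiples_eq[OF i i', of l 0] l by simp
    qed
    then show "wt r l * u (T - l * p i') = 0" using u01 by (metis mult_zero_right)
  qed
  have "(\<Sum>j\<in>{1..k}. abar m j * u (T - j)) = inner i + (\<Sum>i'\<in>{..<r} - {i}. inner i')"
    unfolding inner_def window_sum using i by (simp add: sum.remove)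
  also have "\<dots> = inner i" using other by simp
  finally show ?thesis unfolding inner_def .
qed

text \<open>Consequently the indicator of a residue class modulo \<open>p_i\<close> is a fixed point of the
  base recurrence: on the class the sum is exactly \<open>2\<rho>\<close>, off the class it is at most
  \<open>2\<rho> - 2\<close>.\<close>

lemma class_indicator_step:
  fixes s :: nat
  assumes i: "i < r" and T: "k \<le> T"
  defines "u \<equiv> \<lambda>t. if t mod p i = s then 1 else (0::real)"
  shows "step ((\<Sum>j\<in>{1..k}. abar m j * u (T - j)) - thetabar m) = u T"
proof -
  have u01: "\<forall>t. u t = 0 \<or> u t = 1" and us: "\<forall>t. u t = 1 \<longrightarrow> t mod p i = s"
    unfolding u_def by auto
  show ?thesis
  proof (cases "T mod p i = s")
    case True
    have "(\<Sum>j\<in>{1..k}. abar m j * u (T - j)) = (\<Sum>l\<in>{1..2 * r}. wt r l * u (T - l * p i))"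
      by (rule window_on_class[OF i T u01 us True])
    also have "\<dots> = (\<Sum>l\<in>{1..2 * r}. wt r l)"
    proof (rule sum.cong[OF refl])
      fix l assume "l \<in> {1..2 * r}"
      then have "(T - l * p i) mod p i = T mod p i"
        using mod_diff_self_iff[OF multiple_le[OF i _ T]] by simp
      then show "wt r l * u (T - l * p i) = wt r l" using True unfolding u_def by simp
    qed
    also have "\<dots> = 2 * real r" using wt_total r_ge2 by simp
    finally show ?thesis using True by (simp add: step_def thetabar_def u_def)
  next
    case False
    have "(\<Sum>j\<in>{1..k}. abar m j * u (T - j)) \<le> 2 * (real r - 1)"
      by (rule window_off_class[OF i T u01 us False])
    then show ?thesis using False by (simp add: step_def thetabar_def u_def)
  qed
qed

lemma initial_pattern_iff:
  assumes t: "t < k"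
  shows "(\<exists>l. l < mu m i \<and> t = beta0 m i + l * p i) \<longleftrightarrow> t mod p i = k mod p i"
proof
  have b: "beta0 m i = k mod p i"
    by (simp add: beta0_def mu_def minus_div_mult_eq_mod[symmetric] mult.commute)
  show "t mod p i = k mod p i" if "\<exists>l. l < mu m i \<and> t = beta0 m i + l * p i"
    using that b by auto
  assume e: "t mod p i = k mod p i"
  have "t div p i \<le> k div p i" using t by (simp add: div_le_mono)
  moreover have "t div p i \<noteq> k div p i"
    using e t by (metis div_mult_mod_eq less_irrefl)
  moreover have "t = beta0 m i + (t div p i) * p i" using e b by (metis mod_div_mult_eq add.commute)
  ultimately show "\<exists>l. l < mu m i \<and> t = beta0 m i + l * p i" unfolding mu_def
    by (intro exI[of _ "t div p i"]) simp
qed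

lemma xx_closed: "i < r \<Longrightarrow> xx m i t = (if t mod p i = k mod p i then 1 else 0)"
proof (induction t rule: less_induct)
  case (less t)
  note i = less.prems
  show ?case
  proof (cases "t < k")
    case True
    then show ?thesis unfolding xx_def thr_init[OF True] initial_pattern_iff[OF True] by simp
  next
    case False
    then have T: "k \<le> t" by simp
    have "xx m i t = step ((\<Sum>j\<in>{1..k}. abar m j * xx m i (t - j)) - thetabar m)"
      unfolding xx_def by (rule thr_rec[OF T])
    also have "(\<Sum>j\<in>{1..k}. abar m j * xx m i (t - j))
        = (\<Sum>j\<in>{1..k}. abar m j * (if (t - j) mod p i = k mod p i then 1 else 0))"
      by (rule sum.cong[OF refl]) (use T less.IH[OF _ i] in simp)
    finally show ?thesis using class_indicator_step[OF i T] by simp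
  qed
qed

text \<open>The interleaved sequence \<open>y\<close>: the recurrence with weights \<open>b\<close> acts on each of the \<open>\<rho>\<close>
  residue tracks \<open>n \<equiv> c (mod \<rho>)\<close> separately, as the base recurrence with weights \<open>abar\<close>.\<close>

lemma bb_window:
  "(\<Sum>f\<in>{1..h}. bb m f * Y (N - f)) = (\<Sum>j\<in>{1..k}. abar m j * Y (N - r * j))"
proof -
  have inj: "inj_on (\<lambda>j. r * j) {1..k}" using r_pos by (simp add: inj_on_def)
  have "(\<Sum>j\<in>{1..k}. abar m j * Y (N - r * j)) = (\<Sum>j\<in>{1..k}. bb m (r * j) * Y (N - r * j))"
    by (rule sum.cong[OF refl]) (use r_pos in \<open>auto simp: bb_def\<close>)
  also have "\<dots> = (\<Sum>f\<in>(\<lambda>j. r * j) ` {1..k}. bb m f * Y (N - f))"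
    by (subst sum.reindex[OF inj]) (simp add: o_def)
  also have "\<dots> = (\<Sum>f\<in>{1..h}. bb m f * Y (N - f))"
  proof (rule sum.mono_neutral_left)
    show "(\<lambda>j. r * j) ` {1..k} \<subseteq> {1..h}" using r_pos by (auto simp: h_eq)
    show "\<forall>f\<in>{1..h} - (\<lambda>j. r * j) ` {1..k}. bb m f * Y (N - f) = 0"
      unfolding bb_def by (auto simp: image_iff)
  qed simp
  finally show ?thesis by simp
qed

lemma block_ge_k: "h \<le> N \<Longrightarrow> k \<le> N div r"
  using r_pos by (simp add: h_eq less_eq_div_iff_mult_less_eq mult.commute)

lemma block_sub: "r * j \<le> N \<Longrightarrow> (N - r * j) mod r = N mod r \<and> (N - r * j) div r = N div r - j"
proof -
  assume a: "r * j \<le> N"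
  obtain q c where N: "N = r * q + c" "c < r"
    using r_pos by (metis mod_less_divisor div_mult_mod_eq mult.commute)
  have "r * j < r * (q + 1)" using a N by simp
  then have "j \<le> q" by (simp only: mult_less_cancel1) simp
  then have "N - r * j = r * (q - j) + c" using N by (simp add: diff_mult_distrib2)
  then show ?thesis using N by simp
qed

lemma yy_xx: "yy m n = xx m (n mod r) (1 + n div r)"
proof (induction n rule: less_induct)
  case (less n)
  show ?case
  proof (cases "n < h")
    case True
    then show ?thesis unfolding yy_def by (simp add: thr_init)
  next
    case False
    then have N: "h \<le> n" by simp
    have kJ: "k \<le> n div r" using block_ge_k[OF N] .
    have "yy m n = step ((\<Sum>f\<in>{1..h}. bb m f * yy m (n - f)) - thetabar m)"
      unfolding yy_def by (rule thr_rec[OF N])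
    also have "(\<Sum>f\<in>{1..h}. bb m f * yy m (n - f)) = (\<Sum>j\<in>{1..k}. abar m j * yy m (n - r * j))"
      by (rule bb_window)
    also have "\<dots> = (\<Sum>j\<in>{1..k}. abar m j * xx m (n mod r) ((1 + n div r) - j))"
    proof (rule sum.cong[OF refl])
      fix j assume j: "j \<in> {1..k}"
      have rj: "r * j \<le> n" using j N unfolding h_eq by (metis atLeastAtMost_iff mult_le_mono2 le_trans)
      have "r * j > 0" using j r_pos by simp
      then have "n - r * j < n" using rj by linarith
      then have "yy m (n - r * j) = xx m ((n - r * j) mod r) (1 + (n - r * j) div r)" by (rule less.IH)
      also have "\<dots> = xx m (n mod r) ((1 + n div r) - j)" using block_sub[OF rj] j kJ by (simp add: Suc_diff_le)
      finally show "abar m j * yy m (n - r * j) = abar m j * xx m (n mod r) ((1 + n div r) - j)" by simp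
    qed
    also have "step (\<dots> - thetabar m) = xx m (n mod r) (1 + n div r)"
      unfolding xx_def by (rule thr_rec[symmetric]) (use kJ in simp)
    finally show ?thesis .
  qed
qed

definition y_on :: "nat \<Rightarrow> bool" where
  "y_on n \<longleftrightarrow> (n div r) mod p (n mod r) = (k - 1) mod p (n mod r)"

lemma yy_closed: "yy m n = (if y_on n then 1 else 0)"
proof -
  have c: "n mod r < r" using r_pos by simp
  have "k \<ge> 1" using k_ge2 by simp
  then show ?thesis unfolding yy_xx xx_closed[OF c] y_on_def using Suc_mod_eq_iff by simp
qed

end

text \<open>From now on also the level \<open>d < \<rho>\<close> is fixed. \<open>\<Lambda> = lcm(p_0, \<dots>, p_d)\<close> is a period of
  \<open>y\<close> on the tracks \<open>c \<le> d\<close>, and \<open>n0 = h + L_1(d) - \<rho>\<close> starts the block \<open>K0 = k - 1 + \<Lambda>\<close>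
  in which the tracks \<open>c \<le> d\<close> are switched off.\<close>

locale prime_band_level = prime_band +
  fixes d :: nat
  assumes d_lt: "d < rho m"
begin

definition Lam :: nat where "Lam = Lcm (p ` {0..d})"
definition K0 :: nat where "K0 = k - 1 + Lam"
definition n0 :: nat where "n0 = r * K0"

text \<open>The common target of \<open>z\<close> and the shifted \<open>w\<close>: the sequence \<open>y\<close> with the ones on the
  tracks \<open>c \<le> d\<close> deleted from position \<open>n0\<close> on.\<close>

definition ycut :: "nat \<Rightarrow> real" where
  "ycut n = (if n mod r \<le> d \<and> n0 \<le> n then 0 else yy m n)"

text \<open>The flip positions \<open>n0 + c\<close>, \<open>c \<le> d\<close>: there \<open>y\<close> has a one that \<open>ycut\<close> deletes.\<close>

definition flip_pos :: "nat \<Rightarrow> bool" where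
  "flip_pos N \<longleftrightarrow> N mod r \<le> d \<and> N div r = K0"

definition wsum :: "nat \<Rightarrow> real" where
  "wsum N = (\<Sum>f\<in>{1..h}. bb m f * ycut (N - f))"

lemma Lam_pos: "Lam > 0"
proof -
  have "0 \<notin> p ` {0..d}"
  proof
    assume "0 \<in> p ` {0..d}"
    then obtain x where "x \<le> d" "p x = 0" by auto
    with p_pos[of x] d_lt show False by simp
  qed
  then show ?thesis unfolding Lam_def by (simp del: Lcm_0_iff_nat add: Lcm_0_iff_nat[symmetric] gr0I)
qed

lemma p_dvd_Lam: "c \<le> d \<Longrightarrow> p c dvd Lam"
  unfolding Lam_def by (rule dvd_Lcm) simp

lemma L1_eq: "L1 m d = r * Lam" by (simp add: L1_def Lam_def)

lemma n0_eq: "h + L1 m d - r = n0"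
  using k_ge2 Lam_pos by (simp add: L1_eq n0_def K0_def h_eq algebra_simps diff_mult_distrib2)

lemma h_le_n0: "h \<le> n0"
  unfolding n0_def K0_def h_eq using Lam_pos by (intro mult_le_mono2) simp

lemma ycut_01: "ycut n = 0 \<or> ycut n = 1" unfolding ycut_def yy_closed by auto

lemma ycut_y_on: "ycut n = 1 \<Longrightarrow> y_on n" unfolding ycut_def yy_closed by (auto split: if_splits)

lemma K0_mod: "c \<le> d \<Longrightarrow> K0 mod p c = (k - 1) mod p c"
  using p_dvd_Lam unfolding K0_def by (metis mod_add_right_eq dvd_imp_mod_0 add_0_right)

lemma y_periodic: "n mod r \<le> d \<Longrightarrow> yy m (n + r * Lam) = yy m n"
proof -
  assume c: "n mod r \<le> d"
  then have "(n div r + Lam) mod p (n mod r) = (n div r) mod p (n mod r)"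
    using p_dvd_Lam by (metis mod_add_right_eq dvd_imp_mod_0 add_0_right)
  then show ?thesis unfolding yy_closed y_on_def using r_pos by (simp add: ac_simps)
qed

lemma track_support: "ycut (r * t + c) = 1 \<Longrightarrow> c < r \<Longrightarrow> t mod p c = (k - 1) mod p c"
  using ycut_y_on[of "r * t + c"] r_pos unfolding y_on_def by simp

lemma track_on_class:
  assumes c: "c < r" and t: "t mod p c = (k - 1) mod p c"
  shows "ycut (r * t + c) = (if c \<le> d \<and> K0 \<le> t then 0 else 1)"
proof -
  have "n0 \<le> r * t + c \<longleftrightarrow> K0 \<le> t"
  proof
    assume "n0 \<le> r * t + c"
    then have "r * K0 < r * (t + 1)" using c unfolding n0_def by simp
    then show "K0 \<le> t" by (simp only: mult_less_cancel1) simp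
  qed (simp add: n0_def trans_le_add1)
  then show ?thesis unfolding ycut_def yy_closed y_on_def using c t by simp
qed

lemma wsum_track:
  assumes N: "h \<le> N"
  shows "wsum N = (\<Sum>j\<in>{1..k}. abar m j * ycut (r * (N div r - j) + N mod r))"
proof -
  have "wsum N = (\<Sum>j\<in>{1..k}. abar m j * ycut (N - r * j))" unfolding wsum_def by (rule bb_window)
  also have "\<dots> = (\<Sum>j\<in>{1..k}. abar m j * ycut (r * (N div r - j) + N mod r))"
  proof (rule sum.cong[OF refl])
    fix j assume "j \<in> {1..k}"
    then have "r * j \<le> N" using N unfolding h_eq by (metis atLeastAtMost_iff mult_le_mono2 le_trans)
    moreover have "N - r * j = r * ((N - r * j) div r) + (N - r * j) mod r" by simp
    ultimately have "N - r * j = r * (N div r - j) + N mod r" using block_sub by metis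
    then show "abar m j * ycut (N - r * j) = abar m j * ycut (r * (N div r - j) + N mod r)" by simp
  qed
  finally show ?thesis .
qed

lemma wsum_off_class:
  assumes N: "h \<le> N" and off: "(N div r) mod p (N mod r) \<noteq> (k - 1) mod p (N mod r)"
  shows "wsum N \<le> 2 * real r - 2" and "ycut N = 0" and "\<not> flip_pos N"
proof -
  define c where "c = N mod r"
  have c: "c < r" using r_pos unfolding c_def by simp
  define u where "u t = ycut (r * t + c)" for t
  have u01: "\<forall>t. u t = 0 \<or> u t = 1" unfolding u_def using ycut_01 by blast
  have us: "\<forall>t. u t = 1 \<longrightarrow> t mod p c = (k - 1) mod p c"
    unfolding u_def using track_support c by blast
  have "wsum N = (\<Sum>j\<in>{1..k}. abar m j * u (N div r - j))"
    unfolding wsum_track[OF N] u_def c_def ..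
  also have "\<dots> \<le> 2 * (real r - 1)"
    by (rule window_off_class[OF c block_ge_k[OF N] u01 us]) (use off c_def in simp)
  finally show "wsum N \<le> 2 * real r - 2" by simp
  show "ycut N = 0" using ycut_01[of N] ycut_y_on[of N] off unfolding y_on_def by auto
  show "\<not> flip_pos N" using off K0_mod unfolding flip_pos_def by auto
qed

lemma wsum_on_class:
  assumes N: "h \<le> N" and on: "(N div r) mod p (N mod r) = (k - 1) mod p (N mod r)"
  shows "wsum N = (\<Sum>l\<in>{1..2 * r}. wt r l *
            (if N mod r \<le> d \<and> K0 \<le> N div r - l * p (N mod r) then 0 else 1))"
    and "ycut N = (if N mod r \<le> d \<and> K0 \<le> N div r then 0 else 1)"
proof -
  define c where "c = N mod r"
  define J where "J = N div r"
  have c: "c < r" using r_pos unfolding c_def by simp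
  have J: "k \<le> J" using block_ge_k[OF N] unfolding J_def .
  define u where "u t = ycut (r * t + c)" for t
  have u01: "\<forall>t. u t = 0 \<or> u t = 1" unfolding u_def using ycut_01 by blast
  have us: "\<forall>t. u t = 1 \<longrightarrow> t mod p c = (k - 1) mod p c"
    unfolding u_def using track_support c by blast
  have "wsum N = (\<Sum>j\<in>{1..k}. abar m j * u (J - j))"
    unfolding wsum_track[OF N] u_def c_def J_def ..
  also have "\<dots> = (\<Sum>l\<in>{1..2 * r}. wt r l * u (J - l * p c))"
    by (rule window_on_class[OF c J u01 us]) (use on c_def J_def in simp)
  also have "\<dots> = (\<Sum>l\<in>{1..2 * r}. wt r l * (if c \<le> d \<and> K0 \<le> J - l * p c then 0 else 1))"
  proof (rule sum.cong[OF refl])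
    fix l assume "l \<in> {1..2 * r}"
    then have "(J - l * p c) mod p c = J mod p c"
      using mod_diff_self_iff[OF multiple_le[OF c _ J]] by simp
    then have "(J - l * p c) mod p c = (k - 1) mod p c" using on unfolding c_def J_def by simp
    then show "wt r l * u (J - l * p c) = wt r l * (if c \<le> d \<and> K0 \<le> J - l * p c then 0 else 1)"
      unfolding u_def using track_on_class[OF c] by simp
  qed
  finally show "wsum N = (\<Sum>l\<in>{1..2 * r}. wt r l *
            (if N mod r \<le> d \<and> K0 \<le> N div r - l * p (N mod r) then 0 else 1))"
    unfolding c_def J_def .
  show "ycut N = (if N mod r \<le> d \<and> K0 \<le> N div r then 0 else 1)"
    using track_on_class[OF c on[folded c_def]] unfolding c_def by simp
qed

text \<open>On a switched-off track (\<open>c \<le> d\<close>, block \<open>\<ge> K0\<close>) in the support class, the block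
  distance to \<open>K0\<close> is \<open>q p_c\<close> and the window loses the profile prefix of length \<open>q\<close>;
  \<open>q = 0\<close> is exactly the flip position.\<close>

lemma wsum_switched_off:
  assumes N: "h \<le> N" and on: "(N div r) mod p (N mod r) = (k - 1) mod p (N mod r)"
    and cd: "N mod r \<le> d" and JK: "K0 \<le> N div r"
  shows "(flip_pos N \<and> wsum N = 2 * real r) \<or> (\<not> flip_pos N \<and> wsum N \<le> 2 * real r - 2)"
proof -
  define c where "c = N mod r"
  define J where "J = N div r"
  have c: "c < r" using r_pos unfolding c_def by simp
  have J: "k \<le> J" using block_ge_k[OF N] unfolding J_def .
  have "p c dvd J - K0"
    using on K0_mod cd JK unfolding c_def J_def by (metis mod_eq_dvd_iff_nat)
  then obtain q where q: "J - K0 = q * p c" by (metis dvdE mult.commute)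
  have "(K0 \<le> J - l * p c) = (l \<le> q)" if "l \<in> {1..2 * r}" for l
  proof -
    have "l * p c \<le> J" using multiple_le[OF c _ J] that by simp
    then have "(K0 \<le> J - l * p c) = (l * p c \<le> q * p c)" using q JK unfolding J_def by linarith
    then show ?thesis using p_pos[OF c] by simp
  qed
  then have wq: "wsum N = (\<Sum>l\<in>{1..2 * r}. wt r l * (if q < l then 1 else 0))"
    unfolding wsum_on_class(1)[OF N on, folded c_def J_def] using cd unfolding c_def
    by (intro sum.cong) auto
  show ?thesis
  proof (cases "q = 0")
    case True
    then have "wsum N = (\<Sum>l\<in>{1..2 * r}. wt r l)" unfolding wq by (intro sum.cong) auto
    moreover have "flip_pos N" using True q cd JK unfolding flip_pos_def J_def by simp
    ultimately show ?thesis using wt_total r_ge2 by simp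
  next
    case False
    then have "\<not> flip_pos N" using q p_pos[OF c] unfolding flip_pos_def J_def by auto
    then show ?thesis using wt_tail_le[OF r_ge2] False wq by simp
  qed
qed

text \<open>The threshold behaviour of \<open>ycut\<close> under the unperturbed weights: a one sees exactly the
  threshold, so does a flip position (where the recurrence would wrongly produce a one), and
  every other zero stays at least \<open>2\<close> below it.\<close>

lemma wsum_cases:
  assumes N: "h \<le> N"
  shows "ycut N = 1 \<Longrightarrow> wsum N = 2 * real r"
    and "flip_pos N \<Longrightarrow> wsum N = 2 * real r"
    and "ycut N = 0 \<Longrightarrow> \<not> flip_pos N \<Longrightarrow> wsum N \<le> 2 * real r - 2"
proof -
  have "(wsum N = 2 * real r \<and> (ycut N = 1 \<or> flip_pos N))
      \<or> (wsum N \<le> 2 * real r - 2 \<and> ycut N = 0 \<and> \<not> flip_pos N)"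
  proof (cases "(N div r) mod p (N mod r) = (k - 1) mod p (N mod r)")
    case False
    then show ?thesis using wsum_off_class[OF N] by blast
  next
    case on: True
    show ?thesis
    proof (cases "N mod r \<le> d \<and> K0 \<le> N div r")
      case False
      then have "wsum N = (\<Sum>l\<in>{1..2 * r}. wt r l)"
        unfolding wsum_on_class(1)[OF N on] by (intro sum.cong) auto
      then show ?thesis using wsum_on_class(2)[OF N on] False wt_total r_ge2 by simp
    next
      case True
      then show ?thesis using wsum_switched_off[OF N on] wsum_on_class(2)[OF N on] by auto
    qed
  qed
  then show "ycut N = 1 \<Longrightarrow> wsum N = 2 * real r" and "flip_pos N \<Longrightarrow> wsum N = 2 * real r"
    and "ycut N = 0 \<Longrightarrow> \<not> flip_pos N \<Longrightarrow> wsum N \<le> 2 * real r - 2"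
    by auto
qed

lemma ycut_rec:
  assumes N: "h \<le> N" and nf: "\<not> flip_pos N"
  shows "ycut N = step (wsum N - thetabar m)"
  using ycut_01[of N] wsum_cases[OF N] nf by (auto simp: step_def thetabar_def)

text \<open>The initial values of \<open>w\<close> are those of \<open>ycut\<close> shifted by \<open>L_1(d)\<close>: on the tracks
  \<open>c \<le> d\<close> by periodicity of \<open>y\<close>, except in the last block which is exactly the flip block.\<close>

lemma ww_init:
  assumes n: "n < h"
  shows "ww m d n = ycut (n + L1 m d)"
proof -
  define i where "i = n mod r"
  define j where "j = n div r"
  have nij: "n = r * j + i" unfolding i_def j_def by simp
  have ir: "i < r" using r_pos unfolding i_def by simp
  have md: "(n + r * Lam) mod r = i" "(n + r * Lam) div r = j + Lam"
    unfolding i_def j_def using r_pos by simp_all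
  have jk: "j < k" using n r_pos unfolding j_def h_eq by (simp add: div_less_iff_less_mult mult.commute)
  have w0: "ww m d n = (if i \<le> d then (if j \<le> k - 2 then xx m i (1 + j) else 1 - xx m i k)
      else yy m (n + L1 m d))"
    unfolding ww_def thr_init[OF n] Let_def i_def j_def ..
  show ?thesis
  proof (cases "i \<le> d")
    case id: True
    show ?thesis
    proof (cases "j \<le> k - 2")
      case True
      then have "r * (j + Lam + 1) \<le> r * K0" using k_ge2 jk unfolding K0_def by (intro mult_le_mono2) linarith
      then have "n + r * Lam < n0" using nij ir unfolding n0_def by (simp add: algebra_simps)
      then have "ycut (n + L1 m d) = yy m (n + r * Lam)" unfolding ycut_def L1_eq by simp
      also have "\<dots> = yy m n" using y_periodic id unfolding i_def by simp
      also have "\<dots> = xx m i (1 + j)" unfolding yy_xx i_def j_def ..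
      finally show ?thesis using w0 id True by simp
    next
      case False
      then have "j = k - 1" using jk by simp
      then have "n + r * Lam = n0 + i" using nij unfolding n0_def K0_def by (simp add: distrib_left)
      then have "ycut (n + L1 m d) = 0" unfolding ycut_def L1_eq using md id by simp
      moreover have "xx m i k = 1" using xx_closed[OF ir] by simp
      ultimately show ?thesis using w0 id False by simp
    qed
  next
    case False
    then show ?thesis using w0 md unfolding ycut_def L1_eq by simp
  qed
qed

text \<open>Beyond the initial
  segment the shifted positions lie in blocks \<open>\<ge> k + \<Lambda> > K0\<close>, so no flip is met.\<close>

lemma ww_ycut: "ww m d n = ycut (n + L1 m d)"
proof (induction n rule: less_induct)
  case (less n)
  show ?case
  proof (cases "n < h")
    case True
    then show ?thesis by (rule ww_init)
  next
    case False
    then have N: "h \<le> n" by simp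
    have "ww m d n = step ((\<Sum>f\<in>{1..h}. bb m f * ww m d (n - f)) - thetabar m)"
      unfolding ww_def by (rule thr_rec[OF N])
    also have "(\<Sum>f\<in>{1..h}. bb m f * ww m d (n - f)) = wsum (n + L1 m d)"
      unfolding wsum_def
    proof (rule sum.cong[OF refl])
      fix f assume "f \<in> {1..h}"
      then have "n - f < n" "f \<le> n" using N by auto
      then show "bb m f * ww m d (n - f) = bb m f * ycut (n + L1 m d - f)"
        using less.IH by simp
    qed
    also have "step (wsum (n + L1 m d) - thetabar m) = ycut (n + L1 m d)"
    proof (rule ycut_rec[symmetric])
      show "h \<le> n + L1 m d" using N by simp
      have "K0 < n div r + Lam" using block_ge_k[OF N] k_ge2 unfolding K0_def by simp
      then show "\<not> flip_pos (n + L1 m d)" unfolding flip_pos_def L1_eq using r_pos by simp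
    qed
    finally show ?thesis .
  qed
qed


text \<open>The perturbation adds \<open>\<beta>(d) = \<lambda>/Tot(d)\<close> for every weight index in \<open>A(d)\<close>
  whose window position carries a one; we compare the number of such hits with
  \<open>Tot(d) = |B_0(d)|\<close>. Both sets are split by the track of the position they point to.\<close>

definition hits :: "nat \<Rightarrow> nat set" where
  "hits N = {f \<in> {1..h}. f \<in> AA m d \<and> ycut (N - f) = 1}"

definition hits_on :: "nat \<Rightarrow> nat \<Rightarrow> nat set" where
  "hits_on N c = {f \<in> hits N. (N - f) mod r = c}"

definition hits_via :: "nat \<Rightarrow> nat \<Rightarrow> nat \<Rightarrow> nat set" where
  "hits_via N c l = {f \<in> hits_on N c. \<exists>g\<in>B0 m d. f = l + g}"

definition B0_on :: "nat \<Rightarrow> nat set" where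
  "B0_on c = {g \<in> B0 m d. (n0 - g) mod r = c}"

lemma B0_eq: "B0 m d = {g. 1 \<le> g \<and> g \<le> h - d \<and> y_on (n0 - g)}"
  unfolding B0_def n0_eq yy_closed by auto

lemma B0_props: "g \<in> B0 m d \<Longrightarrow> 1 \<le> g \<and> g \<le> h - d \<and> y_on (n0 - g) \<and> g \<le> n0"
  unfolding B0_eq using h_le_n0 by auto

lemma B0_finite: "finite (B0 m d)" unfolding B0_eq by (rule finite_subset[of _ "{..h}"]) auto

lemma AA_iff: "f \<in> AA m d \<longleftrightarrow> (\<exists>l\<le>d. \<exists>g\<in>B0 m d. f = l + g)"
  unfolding AA_def Bl_def by auto

lemma hits_finite: "finite (hits N)" unfolding hits_def by simp

lemma hits_via_finite: "finite (hits_via N c l)"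
  by (rule finite_subset[OF _ hits_finite[of N]]) (auto simp: hits_via_def hits_on_def)

lemma hits_via_props:
  "f \<in> hits_via N c l \<Longrightarrow> \<exists>g\<in>B0 m d. f = l + g \<and> f \<le> h \<and> y_on (N - f) \<and> (N - f) mod r = c"
  unfolding hits_via_def hits_on_def hits_def using ycut_y_on by auto

lemma hits_on_sub: "hits_on N c \<subseteq> (\<Union>l\<in>{0..d}. hits_via N c l)"
proof
  fix f assume f: "f \<in> hits_on N c"
  then have "f \<in> AA m d" unfolding hits_on_def hits_def by simp
  then obtain l g where "l \<le> d" "g \<in> B0 m d" "f = l + g" using AA_iff by blast
  then show "f \<in> (\<Union>l\<in>{0..d}. hits_via N c l)" using f unfolding hits_via_def by auto
qed

lemma card_hits: "card (hits N) = (\<Sum>c<r. card (hits_on N c))"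
proof -
  have "hits N = (\<Union>c\<in>{..<r}. hits_on N c)" unfolding hits_on_def using r_pos by auto
  moreover have "card (\<Union>c\<in>{..<r}. hits_on N c) = (\<Sum>c<r. card (hits_on N c))"
    by (rule card_UN_disjoint) (auto simp: hits_on_def hits_finite)
  ultimately show ?thesis by simp
qed

lemma card_B0: "card (B0 m d) = (\<Sum>c<r. card (B0_on c))"
proof -
  have "B0 m d = (\<Union>c\<in>{..<r}. B0_on c)" unfolding B0_on_def using r_pos by auto
  moreover have "card (\<Union>c\<in>{..<r}. B0_on c) = (\<Sum>c<r. card (B0_on c))"
    by (rule card_UN_disjoint) (auto simp: B0_on_def B0_finite)
  ultimately show ?thesis by simp
qed

lemma y_on_mod: "y_on n \<Longrightarrow> n mod (r * p (n mod r)) = r * ((k - 1) mod p (n mod r)) + n mod r"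
  unfolding y_on_def by (simp add: mod_mult2_eq)

lemma y_on_dvd: "y_on n1 \<Longrightarrow> y_on n2 \<Longrightarrow> n1 mod r = n2 mod r \<Longrightarrow> int (r * p (n1 mod r)) dvd int n1 - int n2"
  unfolding y_on_def by (intro mixed_radix_dvd) auto

lemma y_on_of_mod:
  assumes c: "c < r" and e: "n mod (r * p c) = r * ((k - 1) mod p c) + c"
  shows "n mod r = c \<and> y_on n"
proof -
  have e2: "r * (n div r mod p c) + n mod r = r * ((k - 1) mod p c) + c"
    using e by (simp add: mod_mult2_eq)
  then have "(r * (n div r mod p c) + n mod r) mod r = (r * ((k - 1) mod p c) + c) mod r" by simp
  then have nc: "n mod r = c" using c by simp
  then have "n div r mod p c = (k - 1) mod p c" using e2 r_pos by simp
  then show ?thesis using nc unfolding y_on_def by simp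
qed

lemma class_rep_lt: "c < r \<Longrightarrow> r * ((k - 1) mod p c) + c < r * p c"
proof -
  assume c: "c < r"
  have "(k - 1) mod p c + 1 \<le> p c" using p_pos[OF c] by (simp add: Suc_leI)
  then have "r * ((k - 1) mod p c + 1) \<le> r * p c" by (rule mult_le_mono2)
  then show ?thesis using c by (simp add: algebra_simps)
qed

lemma card_B0_on_ge: "c < r \<Longrightarrow> (k - 1) div p c \<le> card (B0_on c)"
proof -
  assume c: "c < r"
  define s where "s = r * ((k - 1) mod p c) + c"
  define a where "a = n0 - (h - d)"
  define P where "P = {n \<in> {a..<a + (h - d)}. n mod (r * p c) = s}"
  have q: "r * p c > 0" using r_pos p_pos[OF c] by simp
  have low: "(h - d) div (r * p c) \<le> card P"
    unfolding P_def by (rule card_residue_class_ge[OF q]) (use class_rep_lt[OF c] in \<open>simp add: s_def\<close>)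
  have an: "a + (h - d) = n0" unfolding a_def using h_le_n0 by simp
  have inj: "inj_on (\<lambda>n. n0 - n) P" unfolding P_def using an by (auto simp: inj_on_def)
  have "(\<lambda>n. n0 - n) ` P \<subseteq> B0_on c"
  proof
    fix g assume "g \<in> (\<lambda>n. n0 - n) ` P"
    then obtain n where n: "n \<in> P" "g = n0 - n" by auto
    have "a \<le> n" "n < n0" using n(1) an unfolding P_def by auto
    moreover have "n mod r = c \<and> y_on n" using y_on_of_mod[OF c] n(1) unfolding P_def s_def by simp
    ultimately show "g \<in> B0_on c" unfolding B0_on_def B0_eq using n(2) an by auto
  qed
  moreover have "finite (B0_on c)" unfolding B0_on_def using B0_finite by simp
  ultimately have "card P \<le> card (B0_on c)" by (rule card_inj_on_le[OF inj])
  moreover have "(k - 1) div p c \<le> (h - d) div (r * p c)"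
  proof -
    have "r * (k - 1) \<le> h - d" using d_lt k_ge2 unfolding h_eq by (simp add: diff_mult_distrib2)
    then have "r * (k - 1) div (r * p c) \<le> (h - d) div (r * p c)" by (rule div_le_mono)
    then show ?thesis using r_pos by simp
  qed
  ultimately show ?thesis using low by linarith
qed

lemma card_B0_on_ge_2r: "c < r \<Longrightarrow> 2 * r \<le> card (B0_on c)"
proof -
  assume c: "c < r"
  have "2 * r * p c \<le> k - 1" using window_room[OF c] r_pos by linarith
  then have "2 * r \<le> (k - 1) div p c" using p_pos[OF c] by (simp add: less_eq_div_iff_mult_less_eq)
  then show ?thesis using card_B0_on_ge[OF c] by linarith
qed

lemma card_B0_ge: "r * (2 * r) \<le> card (B0 m d)"
proof -
  have "(\<Sum>c<r. 2 * r) \<le> (\<Sum>c<r. card (B0_on c))" by (rule sum_mono) (simp add: card_B0_on_ge_2r)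
  then show ?thesis unfolding card_B0 by simp
qed

lemma Tot_pos: "Tot m d > 0"
proof -
  have "0 < r * (2 * r)" using r_pos by simp
  then show ?thesis using card_B0_ge unfolding Tot_def by linarith
qed

text \<open>Upper bound for hits on a track: their positions lie in a window of length \<open>h\<close> and
  in one residue class modulo \<open>\<rho> p_c\<close>.\<close>

lemma card_hits_on_le: "h \<le> N \<Longrightarrow> c < r \<Longrightarrow> card (hits_on N c) \<le> card (B0_on c) + 1"
proof -
  assume N: "h \<le> N" and c: "c < r"
  define s where "s = r * ((k - 1) mod p c) + c"
  have q: "r * p c > 0" using r_pos p_pos[OF c] by simp
  have Fh: "1 \<le> f \<and> f \<le> h" if "f \<in> hits_on N c" for f using that unfolding hits_on_def hits_def by simp
  have inj: "inj_on (\<lambda>f. N - f) (hits_on N c)"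
    by (rule inj_onI) (use Fh N in \<open>metis diff_diff_cancel le_trans\<close>)
  have sub: "(\<lambda>f. N - f) ` (hits_on N c) \<subseteq> {N - h..<N - h + h}" using Fh N by fastforce
  have cls: "\<forall>x\<in>(\<lambda>f. N - f) ` (hits_on N c). x mod (r * p c) = s"
    using y_on_mod ycut_y_on unfolding hits_on_def hits_def s_def by auto
  have "card ((\<lambda>f. N - f) ` (hits_on N c)) \<le> (h - 1) div (r * p c) + 1"
    by (rule card_residue_class_le[OF sub q cls])
  moreover have "(h - 1) div (r * p c) = (k - 1) div p c"
    using mult_minus_one_div[OF r_pos] k_ge2 unfolding h_eq by (simp add: div_mult2_eq)
  ultimately show ?thesis using card_image[OF inj] card_B0_on_ge[OF c] by simp
qed

lemma shifted_track_ne: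
  assumes g: "g \<in> B0 m d" and l: "l \<le> d" "l \<noteq> N mod r" and f: "l + g \<le> N"
  shows "(n0 - g) mod r \<noteq> (N - (l + g)) mod r"
proof
  assume eq: "(n0 - g) mod r = (N - (l + g)) mod r"
  have "int (n0 - g) - int (N - (l + g)) = int r * (int K0 - int (N div r)) + (int l - int (N mod r))"
  proof -
    have "int N = int r * int (N div r) + int (N mod r)"
      by (metis of_nat_add of_nat_mult div_mult_mod_eq mult.commute)
    then show ?thesis using B0_props[OF g] f unfolding n0_def by (simp add: algebra_simps of_nat_diff)
  qed
  moreover have "int r dvd int (n0 - g) - int (N - (l + g))"
    using eq by (metis mod_eq_dvd_iff of_nat_mod)
  ultimately have dv: "int r dvd int l - int (N mod r)" by (metis dvd_add_right_iff dvd_triv_left)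
  have "N mod r < r" using r_pos by simp
  then have "\<bar>int l - int (N mod r)\<bar> < int r" using l d_lt by linarith
  moreover have "int l - int (N mod r) \<noteq> 0" using l by simp
  then have "\<bar>int r\<bar> \<le> \<bar>int l - int (N mod r)\<bar>" using dv by (rule dvd_imp_le_int)
  ultimately show False by simp
qed

text \<open>Each shift \<open>l \<ne> N mod \<rho>\<close> contributes at most one hit per track: two such hits differ by
  a multiple of both \<open>\<rho> p_c\<close> and \<open>\<rho> p_{c'}\<close> with \<open>c' \<ne> c\<close>, hence of \<open>\<rho> p_c p_{c'} \<ge> h\<close>.\<close>

lemma card_hits_via_le1:
  assumes N: "h \<le> N" and c: "c < r" and l: "l \<le> d" "l \<noteq> N mod r"
  shows "card (hits_via N c l) \<le> 1"
proof -
  have "\<forall>f1\<in>hits_via N c l. \<forall>f2\<in>hits_via N c l. f1 = f2"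
  proof (intro ballI)
    fix f1 f2 assume f1: "f1 \<in> hits_via N c l" and f2: "f2 \<in> hits_via N c l"
    obtain g1 where g1: "g1 \<in> B0 m d" "f1 = l + g1" "f1 \<le> h" "y_on (N - f1)" "(N - f1) mod r = c"
      using hits_via_props[OF f1] by blast
    obtain g2 where g2: "g2 \<in> B0 m d" "f2 = l + g2" "f2 \<le> h" "y_on (N - f2)" "(N - f2) mod r = c"
      using hits_via_props[OF f2] by blast
    note b1 = B0_props[OF g1(1)] and b2 = B0_props[OF g2(1)]
    define x where "x = int f2 - int f1"
    have xP: "x = int (N - f1) - int (N - f2)" unfolding x_def using g1 g2 N by simp
    have xQ: "x = int (n0 - g1) - int (n0 - g2)" unfolding x_def using b1 b2 g1(2) g2(2) by simp
    have d1: "int (r * p c) dvd x" unfolding xP using y_on_dvd[OF g1(4) g2(4)] g1(5) g2(5) by simp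
    then have "int r dvd x" by (metis dvd_mult_left of_nat_mult)
    then have same: "(n0 - g1) mod r = (n0 - g2) mod r" using xQ nat_mod_eq_if_int_dvd by simp
    define c' where "c' = (n0 - g1) mod r"
    have c': "c' < r" unfolding c'_def using r_pos by simp
    have d2: "int (r * p c') dvd x" unfolding xQ c'_def using y_on_dvd[OF _ _ same] b1 b2 by simp
    have "c' \<noteq> c" using shifted_track_ne[OF g1(1) l] g1 N unfolding c'_def by auto
    then have cop: "coprime (p c) (p c')" using p_coprime[OF c c'] by simp
    have small: "\<bar>x\<bar> < int (r * p c * p c')"
    proof -
      have "\<bar>x\<bar> < int h" unfolding x_def using g1 g2 b1 b2 by auto
      moreover have "h \<le> r * p c * p c'" using k_le_prime_product[OF c c'] unfolding h_eq by simp
      ultimately show ?thesis by linarith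
    qed
    have "x = 0" by (rule small_common_multiple_zero[OF d1 d2 cop r_pos small])
    then show "f1 = f2" unfolding x_def by simp
  qed
  then show ?thesis using card_le_Suc0_iff_eq[OF hits_via_finite] by simp
qed

text \<open>The hits through the shift \<open>l = N mod \<rho>\<close> point to positions in the block \<open>N div \<rho> - K0\<close>
  blocks before \<open>n0\<close>; on track \<open>c\<close> this is only possible if \<open>p_c\<close> divides the distance.\<close>

lemma hits_via_own_empty:
  assumes N: "h \<le> N" and c: "c < r" and nd: "\<not> int (p c) dvd (int (N div r) - int K0)"
  shows "hits_via N c (N mod r) = {}"
proof (rule ccontr)
  assume "hits_via N c (N mod r) \<noteq> {}"
  then obtain f where f: "f \<in> hits_via N c (N mod r)" by blast
  obtain g where g: "g \<in> B0 m d" "f = N mod r + g" "f \<le> h" "y_on (N - f)" "(N - f) mod r = c"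
    using hits_via_props[OF f] by blast
  note b = B0_props[OF g(1)]
  have "int N = int r * int (N div r) + int (N mod r)"
    by (metis of_nat_add of_nat_mult div_mult_mod_eq mult.commute)
  then have PQ: "int (N - f) - int (n0 - g) = int r * (int (N div r) - int K0)"
    using g N b unfolding n0_def by (simp add: algebra_simps of_nat_diff)
  then have same: "(N - f) mod r = (n0 - g) mod r" using nat_mod_eq_if_int_dvd by simp
  have "y_on (n0 - g)" using b by simp
  then have "int (r * p ((N - f) mod r)) dvd int (N - f) - int (n0 - g)"
    by (rule y_on_dvd[OF g(4) _ same])
  then have "int (r * p c) dvd int (N - f) - int (n0 - g)" using g(5) by simp
  then have "int r * int (p c) dvd int r * (int (N div r) - int K0)" using PQ by simp
  then show False using nd r_pos by simp
qed

text \<open>If \<open>ycut N = 1\<close> on a track \<open>\<le> d\<close>, then \<open>N\<close> lies before \<open>n0\<close> and not a full period \<open>\<Lambda>\<close>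
  earlier, so some prime \<open>p_c\<close>, \<open>c \<le> d\<close>, does not divide the block distance to \<open>K0\<close>.\<close>

lemma some_prime_misses:
  assumes N: "h \<le> N" and one: "ycut N = 1" and e: "N mod r \<le> d"
  shows "\<exists>c<r. \<not> int (p c) dvd (int (N div r) - int K0)"
proof (rule ccontr)
  assume "\<not> ?thesis"
  then have all: "\<forall>c<r. int (p c) dvd (int (N div r) - int K0)" by blast
  have "\<not> n0 \<le> N" using one e unfolding ycut_def by (auto split: if_splits)
  then have lt: "N div r < K0" unfolding n0_def by (simp add: div_less_iff_less_mult mult.commute r_pos)
  have "p c dvd K0 - N div r" if "c \<in> {0..d}" for c
  proof -
    have "int (p c) dvd int (N div r) - int K0" using all that d_lt by simp
    then have "int (p c) dvd - (int (N div r) - int K0)" by (simp only: dvd_minus_iff)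
    then have "int (p c) dvd int (K0 - N div r)" using lt by (simp add: of_nat_diff)
    then show ?thesis by (simp only: int_dvd_int_iff)
  qed
  then have "Lam dvd K0 - N div r" unfolding Lam_def by (intro Lcm_least) auto
  then have "Lam \<le> K0 - N div r" using lt by (simp add: dvd_imp_le)
  then have "N div r < k" using lt k_ge2 unfolding K0_def by linarith
  then have "N < h" unfolding h_eq using r_pos by (simp add: div_less_iff_less_mult mult.commute)
  then show False using N by simp
qed

text \<open>Fewer hits than \<open>Tot(d)\<close> at every one of \<open>ycut\<close>: if \<open>N\<close> lies on a track \<open>> d\<close>, each track
  has at most one hit per shift, \<open>d + 1 \<le> \<rho>\<close> in all; otherwise one track loses its own shift
  and every other track has at most one hit more than its part of \<open>B_0(d)\<close>.\<close>

lemma card_hits_on_le_shifts: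
  assumes N: "h \<le> N" and c: "c < r" and own: "N mod r \<le> d \<Longrightarrow> hits_via N c (N mod r) = {}"
  shows "card (hits_on N c) \<le> card ({0..d} - {N mod r})"
proof -
  have "hits_on N c \<subseteq> (\<Union>l\<in>{0..d} - {N mod r}. hits_via N c l)"
    using hits_on_sub[of N c] own by (cases "N mod r \<le> d") auto
  then have "card (hits_on N c) \<le> card (\<Union>l\<in>{0..d} - {N mod r}. hits_via N c l)"
    by (rule card_mono[rotated]) (simp add: hits_via_finite)
  also have "\<dots> \<le> (\<Sum>l\<in>{0..d} - {N mod r}. card (hits_via N c l))" by (rule card_UN_le) simp
  also have "\<dots> \<le> (\<Sum>l\<in>{0..d} - {N mod r}. 1)"
    by (rule sum_mono) (use card_hits_via_le1[OF N c] in auto)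
  finally show ?thesis by simp
qed

lemma card_hits_lt:
  assumes N: "h \<le> N" and one: "ycut N = 1"
  shows "card (hits N) < Tot m d"
proof (cases "N mod r \<le> d")
  case False
  have "card (hits N) \<le> (\<Sum>c<r. d + 1)" unfolding card_hits
  proof (rule sum_mono)
    fix c assume "c \<in> {..<r}"
    then have "card (hits_on N c) \<le> card ({0..d} - {N mod r})"
      using card_hits_on_le_shifts[OF N] False by simp
    also have "{0..d} - {N mod r} = {0..d}" using False by auto
    finally show "card (hits_on N c) \<le> d + 1" by simp
  qed
  also have "\<dots> = r * (d + 1)" by simp
  also have "\<dots> \<le> r * r" using d_lt by (intro mult_le_mono2) simp
  also have "\<dots> < r * (2 * r)" using r_pos by simp
  finally show ?thesis using card_B0_ge unfolding Tot_def by linarith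
next
  case True
  obtain c0 where c0: "c0 < r" "\<not> int (p c0) dvd (int (N div r) - int K0)"
    using some_prime_misses[OF N one True] by blast
  have own: "card (hits_on N c0) \<le> d"
    using card_hits_on_le_shifts[OF N c0(1) hits_via_own_empty[OF N c0]] True by simp
  have "card (hits N) = card (hits_on N c0) + (\<Sum>c\<in>{..<r} - {c0}. card (hits_on N c))"
    unfolding card_hits using c0 by (simp add: sum.remove)
  also have "\<dots> \<le> d + (\<Sum>c\<in>{..<r} - {c0}. card (B0_on c) + 1)"
    using own card_hits_on_le[OF N] by (intro add_mono sum_mono) auto
  also have "\<dots> = d + (r - 1) + (\<Sum>c\<in>{..<r} - {c0}. card (B0_on c))"
  proof -
    have "(\<Sum>c\<in>{..<r} - {c0}. card (B0_on c) + 1)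
        = (\<Sum>c\<in>{..<r} - {c0}. card (B0_on c)) + (\<Sum>c\<in>{..<r} - {c0}. 1)"
      by (rule sum.distrib)
    moreover have "(\<Sum>c\<in>{..<r} - {c0}. (1::nat)) = r - 1" using c0 by simp
    ultimately show ?thesis by simp
  qed
  also have "\<dots> < card (B0_on c0) + (\<Sum>c\<in>{..<r} - {c0}. card (B0_on c))"
    using card_B0_on_ge_2r[OF c0(1)] d_lt by linarith
  also have "\<dots> = Tot m d" unfolding Tot_def card_B0 using c0 by (simp add: sum.remove)
  finally show ?thesis .
qed

text \<open>At a flip position every element \<open>g\<close> of \<open>B_0(d)\<close> yields the hit \<open>g + N mod \<rho>\<close>.\<close>

lemma card_hits_at_flip:
  assumes fl: "flip_pos N"
  shows "Tot m d \<le> card (hits N)"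
proof -
  define i where "i = N mod r"
  have i: "i \<le> d" using fl unfolding flip_pos_def i_def by simp
  have Ni: "N = n0 + i" using fl unfolding flip_pos_def i_def n0_def by (metis div_mult_mod_eq mult.commute)
  have inj: "inj_on (\<lambda>g. g + i) (B0 m d)" by (simp add: inj_on_def)
  have "(\<lambda>g. g + i) ` (B0 m d) \<subseteq> hits N"
  proof
    fix f assume "f \<in> (\<lambda>g. g + i) ` (B0 m d)"
    then obtain g where g: "g \<in> B0 m d" "f = g + i" by auto
    note b = B0_props[OF g(1)]
    have "f \<in> AA m d" using AA_iff g i by (metis add.commute)
    moreover have "1 \<le> f" "f \<le> h" using b g(2) i by auto
    moreover have "ycut (N - f) = 1"
      using Ni g(2) b unfolding ycut_def yy_closed by auto
    ultimately show "f \<in> hits N" unfolding hits_def by simp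
  qed
  then show ?thesis using card_inj_on_le[OF inj _ hits_finite] unfolding Tot_def by simp
qed

lemma perturbed_sum:
  "(\<Sum>f\<in>{1..h}. cc m lam f d * ycut (N - f)) = wsum N + betad m lam d * real (card (hits N))"
proof -
  have "(\<Sum>f\<in>{1..h}. cc m lam f d * ycut (N - f))
      = (\<Sum>f\<in>{1..h}. bb m f * ycut (N - f) + (if f \<in> AA m d \<and> ycut (N - f) = 1 then betad m lam d else 0))"
    by (rule sum.cong[OF refl]) (use ycut_01 in \<open>auto simp: cc_def algebra_simps\<close>)
  also have "\<dots> = wsum N + (\<Sum>f\<in>{1..h}. if f \<in> AA m d \<and> ycut (N - f) = 1 then betad m lam d else 0)"
    unfolding wsum_def by (rule sum.distrib)
  also have "(\<Sum>f\<in>{1..h}. if f \<in> AA m d \<and> ycut (N - f) = 1 then betad m lam d else 0)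
      = (\<Sum>f\<in>hits N. betad m lam d)"
    unfolding hits_def by (rule sum.inter_filter[symmetric]) simp
  finally show ?thesis by simp
qed

text \<open>\<open>ycut\<close> obeys the perturbed recurrence: writing the argument of the step function as
  \<open>(wsum - 2\<rho>) + \<lambda>((hits + 1/8)/Tot - 1)\<close>, the second term is positive at ones (fewer hits),
  negative at flip positions (at least \<open>Tot\<close> hits) and at most \<open>1\<close> everywhere.\<close>

lemma ycut_perturbed_rec:
  assumes lam: "-1 \<le> lam" "lam < 0" and N: "h \<le> N"
  shows "ycut N = step (wsum N + betad m lam d * real (card (hits N)) - theta2 m lam d)"
proof -
  define T where "T = real (Tot m d)"
  define H where "H = real (card (hits N))"
  have T: "T > 0" unfolding T_def using Tot_pos by simp
  have arg: "wsum N + betad m lam d * H - theta2 m lam d = (wsum N - 2 * real r) + lam * ((H + 1/8) / T - 1)"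
    unfolding theta2_def xi_def betad_def thetabar_def T_def[symmetric] using T by (simp add: field_simps)
  consider "ycut N = 1" | "ycut N = 0" "flip_pos N" | "ycut N = 0" "\<not> flip_pos N"
    using ycut_01 by blast
  then have "ycut N = step ((wsum N - 2 * real r) + lam * ((H + 1/8) / T - 1))"
  proof cases
    case 1
    have "H + 1 \<le> T" using card_hits_lt[OF N 1] unfolding H_def T_def by linarith
    then have "(H + 1/8) / T < 1" using T by (simp add: divide_less_eq)
    then have "lam * ((H + 1/8) / T - 1) > 0" using lam by (intro mult_neg_neg) auto
    then show ?thesis using wsum_cases(1)[OF N 1] 1 by (simp add: step_def)
  next
    case 2
    have "T \<le> H" using card_hits_at_flip[OF 2(2)] unfolding H_def T_def by simp
    then have "(H + 1/8) / T > 1" using T by (simp add: less_divide_eq)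
    then have "lam * ((H + 1/8) / T - 1) < 0" using lam by (intro mult_neg_pos) auto
    then show ?thesis using wsum_cases(2)[OF N 2(2)] 2 by (simp add: step_def)
  next
    case 3
    have "lam * ((H + 1/8) / T) \<le> 0" using lam T unfolding H_def by (intro mult_nonpos_nonneg) auto
    then have "lam * ((H + 1/8) / T - 1) \<le> 1" using lam by (simp add: right_diff_distrib)
    then show ?thesis using wsum_cases(3)[OF N 3] 3 by (simp add: step_def)
  qed
  then have "ycut N = step (wsum N + betad m lam d * H - theta2 m lam d)" unfolding arg .
  then show ?thesis unfolding H_def .
qed

lemma zz_ycut:
  assumes lam: "-1 \<le> lam" "lam < 0"
  shows "zz m lam d n = ycut n"
proof (induction n rule: less_induct)
  case (less n)
  show ?case
  proof (cases "n < h")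
    case True
    moreover have "\<not> n0 \<le> n" using True h_le_n0 by simp
    ultimately show ?thesis unfolding zz_def ycut_def by (simp add: thr_init)
  next
    case False
    then have N: "h \<le> n" by simp
    have "zz m lam d n = step ((\<Sum>f\<in>{1..h}. cc m lam f d * zz m lam d (n - f)) - theta2 m lam d)"
      unfolding zz_def by (rule thr_rec[OF N])
    also have "(\<Sum>f\<in>{1..h}. cc m lam f d * zz m lam d (n - f)) = (\<Sum>f\<in>{1..h}. cc m lam f d * ycut (n - f))"
      by (rule sum.cong[OF refl]) (use N less.IH in auto)
    also have "\<dots> = wsum n + betad m lam d * real (card (hits n))" by (rule perturbed_sum)
    finally show ?thesis using ycut_perturbed_rec[OF lam N] by simp
  qed
qed

end

text \<open>The theorem: both \<open>z(\<cdot>, d)\<close> and \<open>w(\<cdot> - L_1(d), d)\<close> equal \<open>ycut\<close>, and the two arguments in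
  the statement differ by exactly \<open>L_1(d)\<close> (the subtraction does not truncate since
  \<open>\<rho>(1 + p_d) \<le> h\<close>).\<close>

theorem lemma21:
  fixes m d :: nat and lam :: real
  assumes "m \<ge> 1" and "rho m \<ge> 2"
    and "-1 \<le> lam" and "lam < 0"
    and "d \<le> rho m - 1"
  shows "\<forall>t::nat.
     zz m lam d (t + (L1 m d + hh m + d + 1 - rho m * (1 + pr m d)))
     = ww m d (t + hh m + d + 1 - rho m * (1 + pr m d))"
proof
  fix t :: nat
  interpret prime_band_level m d
    using assms by unfold_locales auto
  have "1 * p d \<le> (2 * r) * p d" by (rule mult_le_mono1) (use r_pos in simp)
  then have "1 + p d \<le> k" using window_room[OF d_lt] r_pos by linarith
  then have "r * (1 + p d) \<le> h" unfolding h_eq by (rule mult_le_mono2)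
  then have shift: "t + (L1 m d + h + d + 1 - r * (1 + p d)) = (t + h + d + 1 - r * (1 + p d)) + L1 m d"
    by linarith
  show "zz m lam d (t + (L1 m d + h + d + 1 - r * (1 + p d))) = ww m d (t + h + d + 1 - r * (1 + p d))"
    unfolding shift zz_ycut[OF assms(3,4)] ww_ycut ..
qed
end
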